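(* For any $b\in B_k$ there exist unique $b_-\in\mathcal{U}_-$ and $b_+\in\mathcal{P}_+$ such that $b=b_-b_+$.
   Context: Let $\mathfrak{g}=\mathfrak{gl}_n(\mathbb{C})$, $\mathfrak{t}$ a Cartan subalgebra, $k>1$, $T=\sum_{i=1}^{k-1}T_iz^{-i}$ with $T_i\in\mathfrak{t}$, $T_{k-1}\neq0$. $B_k=\{b=\sum_{i=0}^{k-1}b_iz^i:b_0=1,b_i\in\mathfrak{g}\}\subset\mathrm{GL}_n(\mathbb{C}[z]/(z^k))$. For $i=0,\dots,k-2$ let $\mathbb{C}^n=\bigoplus_{p\in J_i}V^{(i)}_p$ be the decomposition into simultaneous eigenspaces of $(T_{i+1},\dots,T_{k-1})$, with $\pi_i:J_j\to J_i$ ($j\le i$) the natural surjections; fix total orders on the $J_i$ such that for $i<k-2$, $\pi_{i+1}(p)<\pi_{i+1}(q)\Rightarrow p<q$. Let $\mathfrak{p}_i^+=\bigoplus_{p\ge q}\mathrm{Hom}(V^{(i)}_p,V^{(i)}_q)$, $\mathfrak{u}_i^-=\bigoplus_{p<q}\mathrm{Hom}(V^{(i)}_p,V^{(i)}_q)$ (sums over $p,q\in J_i$), $\mathfrak{p}^+_{k-1}=\mathfrak{g}$, $\mathfrak{u}^-_{k-1}=0$. $\mathcal{U}_-=\{b\in B_k:b_i\in\mathfrak{u}_i^-,1\le i\le k-1\}$, $\mathcal{P}_+=\{b\in B_k:b_i\in\mathfrak{p}_i^+,1\le i\le k-1\}$. *)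

theory Defs
  imports "HOL-Analysis.Analysis"
begin

type_synonym 'n mat = "complex ^ 'n ^ 'n"

definition diag_mat :: "complex ^ ('n::finite) \<Rightarrow> 'n mat" where
  "diag_mat d = (\<chi> i j. if i = j then d $ i else 0)"

definition cartan :: "('n::finite) mat \<Rightarrow> 'n mat set" where
  "cartan P = {P ** diag_mat d ** matrix_inv P | d. True}"

text \<open>Simultaneous eigenspace V^{(i)}_p of (T_{i+1},...,T_{k-1}) for eigenvalue tuple p
  (p is a function on indices; only its values on {i+1..k-1} matter).\<close>
definition eigsp :: "(nat \<Rightarrow> ('n::finite) mat) \<Rightarrow> nat \<Rightarrow> nat \<Rightarrow> (nat \<Rightarrow> complex) \<Rightarrow> (complex ^ 'n) set" where
  "eigsp T k i p = {v. \<forall>j\<in>{i+1..k-1}. T j *v v = p j *s v}"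

definition Jset :: "(nat \<Rightarrow> ('n::finite) mat) \<Rightarrow> nat \<Rightarrow> nat \<Rightarrow> (nat \<Rightarrow> complex) set" where
  "Jset T k i = {p. (\<forall>j. j \<notin> {i+1..k-1} \<longrightarrow> p j = 0) \<and> eigsp T k i p \<noteq> {0}}"

text \<open>Natural surjection J_i \<rightarrow> J_{i+1}: forget the (i+1)-th eigenvalue.\<close>
definition proj_next :: "nat \<Rightarrow> (nat \<Rightarrow> complex) \<Rightarrow> (nat \<Rightarrow> complex)" where
  "proj_next i p = (\<lambda>j. if j = i + 1 then 0 else p j)"

text \<open>ord i p q means p < q in the chosen total order on J_i.\<close>
definition strict_total_on :: "'a set \<Rightarrow> ('a \<Rightarrow> 'a \<Rightarrow> bool) \<Rightarrow> bool" where
  "strict_total_on A r \<longleftrightarrow>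
     (\<forall>p\<in>A. \<not> r p p) \<and>
     (\<forall>p\<in>A. \<forall>q\<in>A. \<forall>s\<in>A. r p q \<longrightarrow> r q s \<longrightarrow> r p s) \<and>
     (\<forall>p\<in>A. \<forall>q\<in>A. p \<noteq> q \<longrightarrow> r p q \<or> r q p)"

text \<open>p_i^+ = \<Oplus>_{p \<ge> q} Hom(V_p, V_q): X maps each V_p into the sum of the V_q with q \<le> p;
  p_{k-1}^+ = gl_n.\<close>
definition pplus :: "(nat \<Rightarrow> ('n::finite) mat) \<Rightarrow> nat \<Rightarrow> (nat \<Rightarrow> (nat \<Rightarrow> complex) \<Rightarrow> (nat \<Rightarrow> complex) \<Rightarrow> bool)
    \<Rightarrow> nat \<Rightarrow> 'n mat set" where
  "pplus T k ord i = (if i = k - 1 then UNIV else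
     {X. \<forall>p\<in>Jset T k i. \<forall>v\<in>eigsp T k i p.
        X *v v \<in> vec.span (\<Union>q\<in>{q\<in>Jset T k i. q = p \<or> ord i q p}. eigsp T k i q)})"

text \<open>u_i^- = \<Oplus>_{p < q} Hom(V_p, V_q); u_{k-1}^- = 0.\<close>
definition uminus_sp :: "(nat \<Rightarrow> ('n::finite) mat) \<Rightarrow> nat \<Rightarrow> (nat \<Rightarrow> (nat \<Rightarrow> complex) \<Rightarrow> (nat \<Rightarrow> complex) \<Rightarrow> bool)
    \<Rightarrow> nat \<Rightarrow> 'n mat set" where
  "uminus_sp T k ord i = (if i = k - 1 then {0} else
     {X. \<forall>p\<in>Jset T k i. \<forall>v\<in>eigsp T k i p.
        X *v v \<in> vec.span (\<Union>q\<in>{q\<in>Jset T k i. ord i p q}. eigsp T k i q)})"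

text \<open>Elements of gl_n(C[z]/(z^k)) as coefficient sequences b_0, b_1, ... with b_i = 0 for i \<ge> k.\<close>
definition Bk :: "nat \<Rightarrow> (nat \<Rightarrow> ('n::finite) mat) set" where
  "Bk k = {b. b 0 = mat 1 \<and> (\<forall>i\<ge>k. b i = 0)}"

definition tmul :: "nat \<Rightarrow> (nat \<Rightarrow> ('n::finite) mat) \<Rightarrow> (nat \<Rightarrow> 'n mat) \<Rightarrow> (nat \<Rightarrow> 'n mat)" where
  "tmul k b c = (\<lambda>m. if m < k then (\<Sum>i\<le>m. b i ** c (m - i)) else 0)"

definition Uminus :: "(nat \<Rightarrow> ('n::finite) mat) \<Rightarrow> nat \<Rightarrow> (nat \<Rightarrow> (nat \<Rightarrow> complex) \<Rightarrow> (nat \<Rightarrow> complex) \<Rightarrow> bool)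
    \<Rightarrow> (nat \<Rightarrow> 'n mat) set" where
  "Uminus T k ord = {b\<in>Bk k. \<forall>i\<in>{1..k-1}. b i \<in> uminus_sp T k ord i}"

definition Pplus :: "(nat \<Rightarrow> ('n::finite) mat) \<Rightarrow> nat \<Rightarrow> (nat \<Rightarrow> (nat \<Rightarrow> complex) \<Rightarrow> (nat \<Rightarrow> complex) \<Rightarrow> bool)
    \<Rightarrow> (nat \<Rightarrow> 'n mat) set" where
  "Pplus T k ord = {b\<in>Bk k. \<forall>i\<in>{1..k-1}. b i \<in> pplus T k ord i}"

end

theory Submission
  imports Defs
begin

text \<open>In the common eigenbasis given by the columns of P all T j are diagonal and every
  V^{(i)}_p is spanned by basis vectors. In this basis u_i^- consists of the matrices whose
  entry (a, c) vanishes unless weight c < weight a, and p_i^+ of those whose entry vanishes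
  unless weight a \<le> weight c; totality of the order makes these two sets of index pairs
  complementary, so gl_n is the direct sum of u_i^- and p_i^+.
  The coefficient of z^m in b_- b_+ is (b_-)_m + (b_+)_m + \<Sum>_{0<i<m} (b_-)_i (b_+)_{m-i}, so
  the coefficients of b_- and b_+ can be chosen, and are determined, one degree at a time by
  splitting along this direct sum.\<close>

definition complementary :: "'a::ab_group_add set \<Rightarrow> 'a set \<Rightarrow> bool" where
  "complementary A B \<longleftrightarrow> (\<forall>X. \<exists>U\<in>A. \<exists>V\<in>B. X = U + V) \<and>
     (\<forall>U\<in>A. \<forall>V\<in>B. \<forall>U'\<in>A. \<forall>V'\<in>B. U + V = U' + V' \<longrightarrow> U = U' \<and> V = V')"

lemma complementary_vimage:
  assumes f: "bij f" and add: "\<And>x y. f (x + y) = f x + f y" and AB: "complementary A B"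
  shows "complementary (f -` A) (f -` B)"
  unfolding complementary_def
proof (rule conjI; intro allI ballI impI)
  fix X
  obtain U V where UV: "U \<in> A" "V \<in> B" "f X = U + V"
    using AB unfolding complementary_def by blast
  have "f (inv f U + inv f V) = f X"
    using f UV(3) by (simp add: add bij_is_surj surj_f_inv_f)
  then have "X = inv f U + inv f V"
    using f by (simp add: bij_is_inj inj_eq)
  moreover have "inv f U \<in> f -` A" "inv f V \<in> f -` B"
    using f UV(1,2) by (simp_all add: bij_is_surj surj_f_inv_f)
  ultimately show "\<exists>U\<in>f -` A. \<exists>V\<in>f -` B. X = U + V" by blast
next
  fix U V U' V'
  assume "U \<in> f -` A" "V \<in> f -` B" "U' \<in> f -` A" "V' \<in> f -` B" and eq: "U + V = U' + V'"
  moreover from eq have "f U + f V = f U' + f V'"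
    by (metis add)
  ultimately have "f U = f U' \<and> f V = f V'"
    using AB unfolding complementary_def vimage_eq by blast
  then show "U = U' \<and> V = V'"
    using f by (simp add: bij_is_inj inj_eq)
qed

lemma tmul_cong:
  assumes "\<forall>i\<le>m. x i = x' i \<and> y i = y' i"
  shows "tmul k x y m = tmul k x' y' m"
  using assms by (simp add: tmul_def)

lemma tmul_coeff_split:
  assumes "x 0 = mat 1" and "y 0 = mat 1" and "0 < m" and "m < k"
  shows "tmul k x y m = x m + y m + (\<Sum>i\<in>{1..<m}. x i ** y (m - i))"
proof -
  have "{..m} = insert 0 (insert m {1..<m})" using assms(3) by auto
  then show ?thesis using assms by (simp add: tmul_def add.assoc add.commute)
qed

lemma truncated_factorization_exists:
  assumes dec: "\<forall>m\<in>{1..k-1}. complementary (A m) (B m)" and "N < k"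
  shows "\<exists>x\<in>Bk (Suc N). \<exists>y\<in>Bk (Suc N).
    \<forall>m\<in>{1..N}. x m \<in> A m \<and> y m \<in> B m \<and> tmul k x y m = b m"
  using \<open>N < k\<close>
proof (induction N)
  case 0
  have "(\<lambda>i. if i = 0 then mat 1 else 0) \<in> Bk (Suc 0)" by (simp add: Bk_def)
  then show ?case by auto
next
  case (Suc N)
  then obtain x y where x: "x \<in> Bk (Suc N)" and y: "y \<in> Bk (Suc N)"
    and xy: "\<forall>m\<in>{1..N}. x m \<in> A m \<and> y m \<in> B m \<and> tmul k x y m = b m"
    by auto
  obtain U V where UV: "U \<in> A (Suc N)" "V \<in> B (Suc N)"
    and split: "b (Suc N) - (\<Sum>i\<in>{1..<Suc N}. x i ** y (Suc N - i)) = U + V"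
  proof -
    have "complementary (A (Suc N)) (B (Suc N))" using dec Suc.prems by simp
    then show ?thesis using that unfolding complementary_def by blast
  qed
  define x' where "x' = x(Suc N := U)"
  define y' where "y' = y(Suc N := V)"
  have x': "x' \<in> Bk (Suc (Suc N))" and y': "y' \<in> Bk (Suc (Suc N))"
    using x y by (auto simp: Bk_def x'_def y'_def)
  have "x' m \<in> A m \<and> y' m \<in> B m" if "m \<in> {1..Suc N}" for m
    using that UV xy by (cases "m = Suc N") (auto simp: x'_def y'_def)
  moreover have "tmul k x' y' m = b m" if m: "m \<in> {1..Suc N}" for m
  proof (cases "m = Suc N")
    case True
    have "(\<Sum>i\<in>{1..<Suc N}. x' i ** y' (Suc N - i)) = (\<Sum>i\<in>{1..<Suc N}. x i ** y (Suc N - i))"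
      by (intro sum.cong) (auto simp: x'_def y'_def)
    moreover have "x' 0 = mat 1" "y' 0 = mat 1" using x' y' by (auto simp: Bk_def)
    ultimately show ?thesis
      using True Suc.prems split tmul_coeff_split[of x' y' "Suc N" k]
      by (simp add: x'_def y'_def algebra_simps)
  next
    case False
    then have "tmul k x' y' m = tmul k x y m"
      using m by (intro tmul_cong) (auto simp: x'_def y'_def)
    with False m xy show ?thesis by simp
  qed
  ultimately show ?case using x' y' by blast
qed

lemma factorization_exists:
  assumes dec: "\<forall>m\<in>{1..k-1}. complementary (A m) (B m)" and b: "b \<in> Bk k" and "0 < k"
  shows "\<exists>x\<in>Bk k. \<exists>y\<in>Bk k. (\<forall>m\<in>{1..k-1}. x m \<in> A m \<and> y m \<in> B m) \<and> b = tmul k x y"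
proof -
  from truncated_factorization_exists[OF dec, of "k - 1" b] \<open>0 < k\<close>
  obtain x y where x: "x \<in> Bk k" and y: "y \<in> Bk k"
    and xy: "\<forall>m\<in>{1..k-1}. x m \<in> A m \<and> y m \<in> B m \<and> tmul k x y m = b m"
    by auto
  have "b m = tmul k x y m" for m
  proof -
    consider "m = 0" | "m \<in> {1..k-1}" | "k \<le> m" by force
    then show ?thesis
    proof cases
      case 1
      with b x y \<open>0 < k\<close> show ?thesis by (simp add: Bk_def tmul_def)
    next
      case 2
      with xy show ?thesis by simp
    next
      case 3
      with b show ?thesis by (simp add: Bk_def tmul_def)
    qed
  qed
  with x y xy show ?thesis by blast
qed

lemma factorization_unique:
  assumes dec: "\<forall>m\<in>{1..k-1}. complementary (A m) (B m)"
    and "x \<in> Bk k" "y \<in> Bk k" "x' \<in> Bk k" "y' \<in> Bk k"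
    and factors: "\<forall>m\<in>{1..k-1}. x m \<in> A m \<and> y m \<in> B m \<and> x' m \<in> A m \<and> y' m \<in> B m"
    and eq: "tmul k x y = tmul k x' y'"
  shows "x = x' \<and> y = y'"
proof -
  have "x m = x' m \<and> y m = y' m" for m
  proof (induction m rule: less_induct)
    case (less m)
    show ?case
    proof (cases "m = 0 \<or> k \<le> m")
      case True
      with assms(2-5) show ?thesis by (auto simp: Bk_def)
    next
      case False
      then have m: "0 < m" "m < k" by auto
      have "(\<Sum>i\<in>{1..<m}. x i ** y (m - i)) = (\<Sum>i\<in>{1..<m}. x' i ** y' (m - i))"
        using less.IH by (intro sum.cong) auto
      moreover have "x 0 = mat 1" "y 0 = mat 1" "x' 0 = mat 1" "y' 0 = mat 1"
        using assms(2-5) by (auto simp: Bk_def)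
      ultimately have "x m + y m = x' m + y' m"
        using fun_cong[OF eq, of m] tmul_coeff_split[OF _ _ m, of x y] tmul_coeff_split[OF _ _ m, of x' y']
        by simp
      moreover have "complementary (A m) (B m)" using dec m by simp
      moreover have "x m \<in> A m" "y m \<in> B m" "x' m \<in> A m" "y' m \<in> B m"
        using factors m by simp_all
      ultimately show ?thesis unfolding complementary_def by blast
    qed
  qed
  then show ?thesis by auto
qed

lemma unique_factorization:
  assumes "\<forall>m\<in>{1..k-1}. complementary (A m) (B m)" and "b \<in> Bk k" and "0 < k"
  shows "\<exists>!xy. fst xy \<in> {x\<in>Bk k. \<forall>i\<in>{1..k-1}. x i \<in> A i}
              \<and> snd xy \<in> {y\<in>Bk k. \<forall>i\<in>{1..k-1}. y i \<in> B i} \<and> b = tmul k (fst xy) (snd xy)"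
proof (rule ex_ex1I)
  show "\<exists>xy. fst xy \<in> {x\<in>Bk k. \<forall>i\<in>{1..k-1}. x i \<in> A i}
              \<and> snd xy \<in> {y\<in>Bk k. \<forall>i\<in>{1..k-1}. y i \<in> B i} \<and> b = tmul k (fst xy) (snd xy)"
    using factorization_exists[OF assms] by fastforce
next
  fix xy xy'
  assume "fst xy \<in> {x\<in>Bk k. \<forall>i\<in>{1..k-1}. x i \<in> A i}
              \<and> snd xy \<in> {y\<in>Bk k. \<forall>i\<in>{1..k-1}. y i \<in> B i} \<and> b = tmul k (fst xy) (snd xy)"
    and "fst xy' \<in> {x\<in>Bk k. \<forall>i\<in>{1..k-1}. x i \<in> A i}
              \<and> snd xy' \<in> {y\<in>Bk k. \<forall>i\<in>{1..k-1}. y i \<in> B i} \<and> b = tmul k (fst xy') (snd xy')"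
  then show "xy = xy'"
    using factorization_unique[OF assms(1), of "fst xy" "snd xy" "fst xy'" "snd xy'"]
    by (simp add: prod_eq_iff)
qed

definition matrices_supported_in :: "('m \<times> 'n) set \<Rightarrow> ('a::zero^'n^'m) set" where
  "matrices_supported_in S = {Y. \<forall>a c. Y $ a $ c \<noteq> 0 \<longrightarrow> (a, c) \<in> S}"

lemma complementary_matrices_supported_in:
  "complementary (matrices_supported_in S)
     (matrices_supported_in (- S) :: ('a::ab_group_add^'n^'m) set)"
  unfolding complementary_def
proof (rule conjI; intro allI ballI impI)
  fix X :: "'a^'n^'m"
  let ?U = "\<chi> a c. if (a, c) \<in> S then X $ a $ c else 0"
  let ?V = "\<chi> a c. if (a, c) \<in> S then 0 else X $ a $ c"
  have "?U \<in> matrices_supported_in S" "?V \<in> matrices_supported_in (- S)" "X = ?U + ?V"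
    by (auto simp: matrices_supported_in_def vec_eq_iff)
  then show "\<exists>U\<in>matrices_supported_in S. \<exists>V\<in>matrices_supported_in (- S). X = U + V"
    by blast
next
  fix U V U' V' :: "'a^'n^'m"
  assume U: "U \<in> matrices_supported_in S" and V: "V \<in> matrices_supported_in (- S)"
    and U': "U' \<in> matrices_supported_in S" and V': "V' \<in> matrices_supported_in (- S)" and eq: "U + V = U' + V'"
  have "U $ a $ c = U' $ a $ c \<and> V $ a $ c = V' $ a $ c" for a c
  proof (cases "(a, c) \<in> S")
    case True
    with V V' have "V $ a $ c = 0" "V' $ a $ c = 0"
      by (auto simp: matrices_supported_in_def)
    with arg_cong[OF eq, of "\<lambda>Y. Y $ a $ c"] show ?thesis by simp
  next
    case False
    with U U' have "U $ a $ c = 0" "U' $ a $ c = 0"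
      by (auto simp: matrices_supported_in_def)
    with arg_cong[OF eq, of "\<lambda>Y. Y $ a $ c"] show ?thesis by simp
  qed
  then show "U = U' \<and> V = V'" by (simp add: vec_eq_iff)
qed

lemma strict_total_on_not_less_iff:
  assumes "strict_total_on A r" and "x \<in> A" and "y \<in> A"
  shows "\<not> r x y \<longleftrightarrow> x = y \<or> r y x"
  using assms unfolding strict_total_on_def by metis

lemma matrix_add_rdistrib: "(A + B) ** C = A ** C + B ** C"
  by (vector matrix_matrix_mult_def sum.distrib distrib_right)

lemma matrix_vector_mult_axis_component:
  "((Y :: 'a::semiring_1^'n^'m) *v axis c 1) $ a = Y $ a $ c"
  by (simp add: matrix_vector_mult_def axis_def if_distrib cong: if_cong)

lemma matrix_vector_mult_preserves_support_iff:
  fixes Y :: "'a::semiring_1^'n^'m"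
  shows "(\<forall>w. (\<forall>c. w $ c \<noteq> 0 \<longrightarrow> c \<in> C) \<longrightarrow> (\<forall>a. (Y *v w) $ a \<noteq> 0 \<longrightarrow> a \<in> A))
     \<longleftrightarrow> (\<forall>a c. Y $ a $ c \<noteq> 0 \<longrightarrow> c \<in> C \<longrightarrow> a \<in> A)"
proof (intro iffI allI impI)
  fix a c
  assume H: "\<forall>w. (\<forall>c. w $ c \<noteq> 0 \<longrightarrow> c \<in> C) \<longrightarrow> (\<forall>a. (Y *v w) $ a \<noteq> 0 \<longrightarrow> a \<in> A)"
    and "Y $ a $ c \<noteq> 0" and "c \<in> C"
  then have "(Y *v axis c 1) $ a \<noteq> 0" and "\<forall>c'. axis c 1 $ c' \<noteq> (0::'a) \<longrightarrow> c' \<in> C"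
    by (simp_all only: matrix_vector_mult_axis_component) (auto simp: axis_def)
  with H show "a \<in> A" by blast
next
  fix w a
  assume H: "\<forall>a c. Y $ a $ c \<noteq> 0 \<longrightarrow> c \<in> C \<longrightarrow> a \<in> A"
    and w: "\<forall>c. w $ c \<noteq> 0 \<longrightarrow> c \<in> C" and "(Y *v w) $ a \<noteq> 0"
  then obtain c where "Y $ a $ c * w $ c \<noteq> 0"
    unfolding matrix_vector_mult_def using sum.not_neutral_contains_not_neutral by force
  with H w show "a \<in> A" by (metis mult_not_zero)
qed

lemma matrix_vector_mult_sum:
  "finite S \<Longrightarrow> (A::'a::comm_ring_1^'n^'m) *v sum f S = (\<Sum>x\<in>S. A *v f x)"
  by (induction S rule: finite_induct) (simp_all add: matrix_vector_right_distrib)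

lemma diag_mat_mult_vector: "diag_mat e *v w = (\<chi> l. e $ l * w $ l)"
  by (simp add: diag_mat_def matrix_vector_mult_def vec_eq_iff if_distrib if_distribR cong: if_cong)

locale simultaneously_diagonal =
  fixes P Q :: "complex^'n::finite^'n" and d :: "nat \<Rightarrow> complex^'n"
    and T :: "nat \<Rightarrow> complex^'n^'n" and k i :: nat
  assumes right_inverse: "P ** Q = mat 1" and left_inverse: "Q ** P = mat 1"
    and T_eq: "\<forall>j\<in>{i+1..k-1}. T j = P ** diag_mat (d j) ** Q"
begin

text \<open>The columns of P form a common eigenbasis of T(i+1), ..., T(k-1); column l has the
  eigenvalue tuple weight l, and Q *v v are the coordinates of v in this basis.\<close>

definition weight :: "'n \<Rightarrow> nat \<Rightarrow> complex" where
  "weight l = (\<lambda>j. if j \<in> {i+1..k-1} then d j $ l else 0)"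

definition weight_space :: "(nat \<Rightarrow> complex) set \<Rightarrow> (complex^'n) set" where
  "weight_space W = {v. \<forall>l. (Q *v v) $ l \<noteq> 0 \<longrightarrow> weight l \<in> W}"

lemma coords_inverse [simp]: "Q *v (P *v w) = w" "P *v (Q *v v) = v"
  by (simp_all add: matrix_vector_mul_assoc left_inverse right_inverse)

lemma conj_inverse [simp]: "Q ** (P ** Y ** Q) ** P = Y" "P ** (Q ** X ** P) ** Q = X"
proof -
  have "Q ** (P ** Y ** Q) ** P = (Q ** P) ** Y ** (Q ** P)"
    "P ** (Q ** X ** P) ** Q = (P ** Q) ** X ** (P ** Q)"
    by (simp_all add: matrix_mul_assoc)
  then show "Q ** (P ** Y ** Q) ** P = Y" "P ** (Q ** X ** P) ** Q = X"
    by (simp_all add: left_inverse right_inverse)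
qed

lemma mem_eigsp_iff:
  "v \<in> eigsp T k i p \<longleftrightarrow> (\<forall>l. (Q *v v) $ l \<noteq> 0 \<longrightarrow> (\<forall>j\<in>{i+1..k-1}. d j $ l = p j))"
proof -
  have "T j *v v = p j *s v \<longleftrightarrow> (\<forall>l. (Q *v v) $ l \<noteq> 0 \<longrightarrow> d j $ l = p j)"
    if j: "j \<in> {i+1..k-1}" for j
  proof -
    let ?w = "Q *v v"
    have "T j *v v = P *v (diag_mat (d j) *v ?w)"
      using T_eq j by (simp add: matrix_vector_mul_assoc matrix_mul_assoc)
    then have "T j *v v = p j *s v \<longleftrightarrow> P *v (diag_mat (d j) *v ?w) = P *v (p j *s ?w)"
      by (simp add: vector_scalar_commute)
    also have "\<dots> \<longleftrightarrow> diag_mat (d j) *v ?w = p j *s ?w"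
      by (metis coords_inverse(1))
    also have "\<dots> \<longleftrightarrow> (\<forall>l. ?w $ l \<noteq> 0 \<longrightarrow> d j $ l = p j)"
      by (auto simp: diag_mat_mult_vector vec_eq_iff mult.commute)
    finally show ?thesis .
  qed
  then show ?thesis unfolding eigsp_def by blast
qed

lemma mem_eigsp_Jset_iff:
  assumes "p \<in> Jset T k i"
  shows "v \<in> eigsp T k i p \<longleftrightarrow> v \<in> weight_space {p}"
proof -
  have "(\<forall>j\<in>{i+1..k-1}. d j $ l = p j) \<longleftrightarrow> weight l = p" for l
    using assms by (auto simp: Jset_def weight_def fun_eq_iff)
  then show ?thesis by (simp add: mem_eigsp_iff weight_space_def)
qed

lemma axis_mem_weight_space: "P *v axis l 1 \<in> weight_space {weight l}"
  by (simp add: weight_space_def axis_def)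

lemma Jset_eq_range_weight: "Jset T k i = range weight"
proof
  show "Jset T k i \<subseteq> range weight"
  proof
    fix p assume p: "p \<in> Jset T k i"
    have "0 \<in> eigsp T k i p" by (simp add: eigsp_def)
    with p obtain v where v: "v \<in> eigsp T k i p" "v \<noteq> 0" by (auto simp: Jset_def)
    then have "Q *v v \<noteq> 0" by (metis coords_inverse(2) matrix_vector_mult_0_right)
    then obtain l where "(Q *v v) $ l \<noteq> 0" by (auto simp: vec_eq_iff)
    with v p show "p \<in> range weight"
      by (auto simp: mem_eigsp_Jset_iff weight_space_def)
  qed
next
  show "range weight \<subseteq> Jset T k i"
  proof
    fix p assume "p \<in> range weight"
    then obtain l where p: "p = weight l" by blast
    have "P *v axis l 1 \<in> eigsp T k i p"
      by (auto simp: p mem_eigsp_iff axis_def weight_def)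
    moreover have "P *v axis l 1 \<noteq> 0"
      by (metis axis_eq_0_iff coords_inverse(1) matrix_vector_mult_0_right one_neq_zero)
    ultimately show "p \<in> Jset T k i"
      by (auto simp: Jset_def p weight_def)
  qed
qed

lemma span_weight_spaces: "vec.span (\<Union>q\<in>W. weight_space {q}) = weight_space W"
proof
  have "vec.subspace (weight_space W)"
    unfolding vec.subspace_def weight_space_def
    by (auto simp: matrix_vector_right_distrib vector_scalar_commute) (metis add.left_neutral)
  then show "vec.span (\<Union>q\<in>W. weight_space {q}) \<subseteq> weight_space W"
    by (rule vec.span_minimal[rotated]) (auto simp: weight_space_def)
next
  show "weight_space W \<subseteq> vec.span (\<Union>q\<in>W. weight_space {q})"
  proof
    fix v assume v: "v \<in> weight_space W"
    let ?w = "Q *v v"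
    have "v = P *v (\<Sum>l\<in>UNIV. ?w $ l *s axis l 1)"
      by (simp add: basis_expansion)
    also have "\<dots> = (\<Sum>l\<in>UNIV. ?w $ l *s (P *v axis l 1))"
      by (simp add: matrix_vector_mult_sum vector_scalar_commute)
    also have "\<dots> \<in> vec.span (\<Union>q\<in>W. weight_space {q})"
    proof (rule vec.span_sum)
      fix l
      show "?w $ l *s (P *v axis l 1) \<in> vec.span (\<Union>q\<in>W. weight_space {q})"
      proof (cases "?w $ l = 0")
        case True then show ?thesis by (simp add: vec.span_zero)
      next
        case False
        then have "weight l \<in> W" using v by (auto simp: weight_space_def)
        then show ?thesis
          using axis_mem_weight_space by (blast intro: vec.span_scale vec.span_base)
      qed
    qed
    finally show "v \<in> vec.span (\<Union>q\<in>W. weight_space {q})" .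
  qed
qed

lemma eigsp_weight: "eigsp T k i (weight l) = weight_space {weight l}"
  using mem_eigsp_Jset_iff[of "weight l"] by (auto simp: Jset_eq_range_weight)

lemma span_eigsp_eq_weight_space:
  "vec.span (\<Union>q\<in>{q\<in>Jset T k i. R q}. eigsp T k i q) = weight_space (Collect R)"
proof -
  have "(\<Union>q\<in>{q\<in>Jset T k i. R q}. eigsp T k i q) = (\<Union>q\<in>{q\<in>Jset T k i. R q}. weight_space {q})"
    using mem_eigsp_Jset_iff by blast
  then have "vec.span (\<Union>q\<in>{q\<in>Jset T k i. R q}. eigsp T k i q) = weight_space {q\<in>Jset T k i. R q}"
    by (simp add: span_weight_spaces)
  also have "\<dots> = weight_space (Collect R)"
    by (auto simp: weight_space_def Jset_eq_range_weight)
  finally show ?thesis .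
qed

lemma maps_weight_spaces_iff:
  "(\<forall>l. \<forall>v\<in>weight_space {weight l}. X *v v \<in> weight_space {q. R (weight l) q})
   \<longleftrightarrow> Q ** X ** P \<in> matrices_supported_in {(a, c). R (weight c) (weight a)}"
proof -
  let ?Y = "Q ** X ** P"
  have coords: "Q *v (X *v (P *v w)) = ?Y *v w" for w
    by (simp add: matrix_vector_mul_assoc matrix_mul_assoc)
  have "(\<forall>l. \<forall>v\<in>weight_space {weight l}. X *v v \<in> weight_space {q. R (weight l) q})
    \<longleftrightarrow> (\<forall>l w. (\<forall>c. w $ c \<noteq> 0 \<longrightarrow> c \<in> weight -` {weight l})
      \<longrightarrow> (\<forall>a. (?Y *v w) $ a \<noteq> 0 \<longrightarrow> a \<in> {a. R (weight l) (weight a)}))"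
  proof (intro iffI allI impI ballI)
    fix l w a
    assume H: "\<forall>l. \<forall>v\<in>weight_space {weight l}. X *v v \<in> weight_space {q. R (weight l) q}"
      and "\<forall>c. w $ c \<noteq> 0 \<longrightarrow> c \<in> weight -` {weight l}" and "(?Y *v w) $ a \<noteq> 0"
    moreover from this(2) have "P *v w \<in> weight_space {weight l}"
      by (simp add: weight_space_def)
    with H have "X *v (P *v w) \<in> weight_space {q. R (weight l) q}" by blast
    ultimately show "a \<in> {a. R (weight l) (weight a)}"
      by (simp add: weight_space_def flip: coords)
  next
    fix l v
    assume H: "\<forall>l w. (\<forall>c. w $ c \<noteq> 0 \<longrightarrow> c \<in> weight -` {weight l})
      \<longrightarrow> (\<forall>a. (?Y *v w) $ a \<noteq> 0 \<longrightarrow> a \<in> {a. R (weight l) (weight a)})"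
      and "v \<in> weight_space {weight l}"
    then have "\<forall>c. (Q *v v) $ c \<noteq> 0 \<longrightarrow> c \<in> weight -` {weight l}"
      by (simp add: weight_space_def)
    with H have "\<forall>a. (?Y *v (Q *v v)) $ a \<noteq> 0 \<longrightarrow> a \<in> {a. R (weight l) (weight a)}"
      by blast
    then show "X *v v \<in> weight_space {q. R (weight l) q}"
      using coords[of "Q *v v"] by (simp add: weight_space_def)
  qed
  also have "\<dots> \<longleftrightarrow> (\<forall>l a c. ?Y $ a $ c \<noteq> 0 \<longrightarrow> weight c = weight l \<longrightarrow> R (weight l) (weight a))"
    by (simp only: matrix_vector_mult_preserves_support_iff) simp
  also have "\<dots> \<longleftrightarrow> ?Y \<in> matrices_supported_in {(a, c). R (weight c) (weight a)}"
    by (auto simp: matrices_supported_in_def) metis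
  finally show ?thesis .
qed

lemma maps_eigsp_into_span_iff:
  "(\<forall>p\<in>Jset T k i. \<forall>v\<in>eigsp T k i p.
      X *v v \<in> vec.span (\<Union>q\<in>{q\<in>Jset T k i. R p q}. eigsp T k i q))
   \<longleftrightarrow> Q ** X ** P \<in> matrices_supported_in {(a, c). R (weight c) (weight a)}"
  unfolding span_eigsp_eq_weight_space
  by (simp add: eigsp_weight Jset_eq_range_weight maps_weight_spaces_iff)

lemma uminus_sp_eq:
  assumes "i \<noteq> k - 1"
  shows "uminus_sp T k ord i
    = (\<lambda>X. Q ** X ** P) -` matrices_supported_in {(a, c). ord i (weight c) (weight a)}"
  using maps_eigsp_into_span_iff[where R = "ord i"] assms by (auto simp: uminus_sp_def)

lemma pplus_eq:
  assumes "i \<noteq> k - 1"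
  shows "pplus T k ord i = (\<lambda>X. Q ** X ** P) -`
    matrices_supported_in {(a, c). weight a = weight c \<or> ord i (weight a) (weight c)}"
  using maps_eigsp_into_span_iff[where R = "\<lambda>p q. q = p \<or> ord i q p"] assms
  by (auto simp: pplus_def)

lemma complementary_uminus_sp_pplus:
  assumes "i \<noteq> k - 1" and total: "strict_total_on (Jset T k i) (ord i)"
  shows "complementary (uminus_sp T k ord i) (pplus T k ord i)"
proof -
  let ?S = "{(a, c). ord i (weight c) (weight a)}"
  have "\<not> ord i (weight c) (weight a) \<longleftrightarrow> weight a = weight c \<or> ord i (weight a) (weight c)"
    for a c
    using strict_total_on_not_less_iff[OF total, of "weight c" "weight a"]
    by (auto simp: Jset_eq_range_weight)
  then have compl: "- ?S = {(a, c). weight a = weight c \<or> ord i (weight a) (weight c)}"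
    by auto
  have bij: "bij (\<lambda>X. Q ** X ** P)"
    by (rule bij_betw_byWitness[where f' = "\<lambda>Y. P ** Y ** Q"]) auto
  have add: "Q ** (X + Y) ** P = Q ** X ** P + Q ** Y ** P" for X Y
    by (simp add: matrix_add_ldistrib matrix_add_rdistrib)
  have "complementary ((\<lambda>X. Q ** X ** P) -` matrices_supported_in ?S)
      ((\<lambda>X. Q ** X ** P) -` matrices_supported_in (- ?S))"
    by (rule complementary_vimage[OF bij add complementary_matrices_supported_in])
  then show ?thesis
    by (simp only: uminus_sp_eq[OF assms(1)] pplus_eq[OF assms(1)] compl)
qed

end

lemma complementary_uminus_sp_pplus_top:
  "complementary (uminus_sp T k ord (k - 1)) (pplus T k ord (k - 1))"
  by (simp add: complementary_def uminus_sp_def pplus_def)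

theorem lemma3p5:
  fixes T :: "nat \<Rightarrow> complex ^ 'n ^ 'n" and P :: "complex ^ 'n ^ 'n" and k :: nat
    and ord :: "nat \<Rightarrow> (nat \<Rightarrow> complex) \<Rightarrow> (nat \<Rightarrow> complex) \<Rightarrow> bool"
    and b :: "nat \<Rightarrow> complex ^ 'n ^ 'n"
  assumes "invertible P"
    and "k > 1"
    and "\<forall>i\<in>{1..k-1}. T i \<in> cartan P"
    and "T (k - 1) \<noteq> 0"
    and "\<forall>i\<le>k-2. strict_total_on (Jset T k i) (ord i)"
    and "\<forall>i<k-2. \<forall>p\<in>Jset T k i. \<forall>q\<in>Jset T k i.
           ord (i+1) (proj_next i p) (proj_next i q) \<longrightarrow> ord i p q"
    and "b \<in> Bk k"
  shows "\<exists>!bmp. fst bmp \<in> Uminus T k ord \<and> snd bmp \<in> Pplus T k ord \<and>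
                b = tmul k (fst bmp) (snd bmp)"
proof -
  let ?Q = "matrix_inv P"
  have inverse: "P ** ?Q = mat 1 \<and> ?Q ** P = mat 1"
    using assms(1) unfolding invertible_def matrix_inv_def by (rule someI_ex)
  have "\<forall>j\<in>{1..k-1}. \<exists>e. T j = P ** diag_mat e ** ?Q"
    using assms(3) unfolding cartan_def by blast
  then obtain d where d: "\<forall>j\<in>{1..k-1}. T j = P ** diag_mat (d j) ** ?Q"
    by (metis bchoice)
  have "complementary (uminus_sp T k ord m) (pplus T k ord m)" if m: "m \<in> {1..k-1}" for m
  proof (cases "m = k - 1")
    case True
    then show ?thesis using complementary_uminus_sp_pplus_top by simp
  next
    case False
    interpret simultaneously_diagonal P ?Q d T k m
      using inverse d m by unfold_locales auto
    show ?thesis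
      using False m assms(5) by (intro complementary_uminus_sp_pplus) auto
  qed
  then show ?thesis
    unfolding Uminus_def Pplus_def using assms(2,7) by (intro unique_factorization) simp_all
qed

end
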